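(* Let $\Delta_+=\{\delta-\gamma:\gamma\in\Sigma^+_{\beta,0}\cap\Sigma_{\delta,1}\}$ and $\Delta_-=\{\delta+\gamma:\gamma\in\Sigma^+_{\beta,0}\cap\Sigma_{\delta,-1}\}$. Then $\Sigma_{\beta,1}\cap\Sigma_{\delta,1}=\Delta_+\sqcup\Delta_-$, $\Sigma_{\beta,1}\cap\Sigma_{\delta,0}=\{\beta-\gamma:\gamma\in\Sigma_{\beta,1}\cap\Sigma_{\delta,1}\}$, $\Sigma_{\beta,1}\cap\Sigma_{\delta,2}=\{\delta\}$, and $\Sigma_{\beta,1}\cap\Sigma_{\delta,-1}=\{\beta-\delta\}$.
   Context: Let $\mathfrak g$ be a compact simple Lie algebra not isomorphic to $\mathfrak{sp}(n)$, $\mathfrak a$ a maximal abelian subalgebra, $\Sigma$ the root system of $\mathfrak g^{\mathbb C}$ w.r.t. $\mathfrak a^{\mathbb C}$ with inner product $(\,,\,)$ induced by the Killing form, $\Sigma^+$ a positive system with highest root $\beta$. For $\gamma\in\Sigma$ and $n\in\mathbb Z$ let $\Sigma_{\gamma,n}=\{\alpha\in\Sigma:2(\gamma,\alpha)/(\gamma,\gamma)=n\}$ and $\Sigma^+_{\gamma,n}=\Sigma_{\gamma,n}\cap\Sigma^+$. Fix $\delta\in\Sigma_{\beta,1}$ with $(\delta,\delta)=(\beta,\beta)$. *)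

theory Defs
  imports "HOL-Analysis.Analysis"
begin

text \<open>Abstract (finite, crystallographic, reduced) root systems in a Euclidean space.
  The inner product plays the role of the one induced by the Killing form.\<close>

definition cartan_int :: "'a::euclidean_space \<Rightarrow> 'a \<Rightarrow> real" where
  "cartan_int \<gamma> \<alpha> = 2 * (\<gamma> \<bullet> \<alpha>) / (\<gamma> \<bullet> \<gamma>)"

definition root_system :: "'a::euclidean_space set \<Rightarrow> bool" where
  "root_system R \<longleftrightarrow>
     finite R \<and> 0 \<notin> R \<and> span R = UNIV \<and>
     (\<forall>\<alpha>\<in>R. \<forall>\<beta>\<in>R. \<beta> - cartan_int \<alpha> \<beta> *\<^sub>R \<alpha> \<in> R) \<and>
     (\<forall>\<alpha>\<in>R. \<forall>\<beta>\<in>R. cartan_int \<alpha> \<beta> \<in> \<int>) \<and>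
     (\<forall>\<alpha>\<in>R. \<forall>c::real. c *\<^sub>R \<alpha> \<in> R \<longrightarrow> c = 1 \<or> c = -1)"

definition irreducible_root_system :: "'a::euclidean_space set \<Rightarrow> bool" where
  "irreducible_root_system R \<longleftrightarrow> root_system R \<and>
     \<not> (\<exists>A B. A \<noteq> {} \<and> B \<noteq> {} \<and> A \<union> B = R \<and> A \<inter> B = {} \<and>
            (\<forall>a\<in>A. \<forall>b\<in>B. a \<bullet> b = 0))"

definition positive_system :: "'a::euclidean_space set \<Rightarrow> 'a set \<Rightarrow> bool" where
  "positive_system R P \<longleftrightarrow>
     (\<exists>v. (\<forall>\<alpha>\<in>R. v \<bullet> \<alpha> \<noteq> 0) \<and> P = {\<alpha>\<in>R. v \<bullet> \<alpha> > 0})"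

definition highest_root :: "'a::euclidean_space set \<Rightarrow> 'a set \<Rightarrow> 'a \<Rightarrow> bool" where
  "highest_root R P \<beta> \<longleftrightarrow> \<beta> \<in> R \<and>
     (\<forall>\<alpha>\<in>R. \<exists>c. (\<forall>\<gamma>\<in>P. c \<gamma> \<ge> (0::real)) \<and> \<beta> - \<alpha> = (\<Sum>\<gamma>\<in>P. c \<gamma> *\<^sub>R \<gamma>))"

definition Sig :: "'a::euclidean_space set \<Rightarrow> 'a \<Rightarrow> int \<Rightarrow> 'a set" where
  "Sig R \<gamma> n = {\<alpha>\<in>R. cartan_int \<gamma> \<alpha> = of_int n}"

end

theory Submission
  imports Defs
begin

(* If a root \<alpha> pairs to 1 with a root \<gamma>, the reflection in \<gamma>
   sends \<alpha> to \<alpha> - \<gamma>; hence \<alpha> \<mapsto> \<delta> - \<alpha> and \<alpha> \<mapsto> \<beta> - \<alpha> are involutions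
   relating the various slices \<Sigma>_{\<beta>,1} \<inter> \<Sigma>_{\<delta>,n}, and positivity only decides the
   sign of \<delta> - \<alpha>. Secondly, a root \<alpha> with 2(\<beta>,\<alpha>) = (\<beta>,\<beta>) is no longer than \<beta>,
   because 2(\<alpha>,\<beta>)/(\<alpha>,\<alpha>) = (\<beta>,\<beta>)/(\<alpha>,\<alpha>) is a positive integer. So if moreover
   (\<alpha>,\<rho>) = (\<rho>,\<rho>) = (\<beta>,\<beta>), then |\<alpha> - \<rho>|^2 = |\<alpha>|^2 - |\<beta>|^2 \<le> 0 and \<alpha> = \<rho>; this
   pins down the slices n = 2 (with \<rho> = \<delta>) and n = -1 (with \<rho> = \<beta> - \<delta>). *)

lemma cartan_int_diff: "cartan_int \<gamma> (\<alpha> - \<alpha>') = cartan_int \<gamma> \<alpha> - cartan_int \<gamma> \<alpha>'"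
  unfolding cartan_int_def by (simp add: inner_diff_right diff_divide_distrib algebra_simps)

lemma cartan_int_uminus: "cartan_int \<gamma> (- \<alpha>) = - cartan_int \<gamma> \<alpha>"
  unfolding cartan_int_def by simp

lemma cartan_int_self: "\<gamma> \<noteq> 0 \<Longrightarrow> cartan_int \<gamma> \<gamma> = 2"
  unfolding cartan_int_def by simp

lemma cartan_int_eq_iff: "\<gamma> \<noteq> 0 \<Longrightarrow> cartan_int \<gamma> \<alpha> = c \<longleftrightarrow> 2 * (\<gamma> \<bullet> \<alpha>) = c * (\<gamma> \<bullet> \<gamma>)"
  unfolding cartan_int_def by (auto simp: field_simps)

lemma cartan_int_commute: "\<alpha> \<bullet> \<alpha> = \<gamma> \<bullet> \<gamma> \<Longrightarrow> cartan_int \<gamma> \<alpha> = cartan_int \<alpha> \<gamma>"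
  unfolding cartan_int_def by (simp add: inner_commute)

lemma mem_Sig_iff: "\<alpha> \<in> Sig R \<gamma> n \<longleftrightarrow> \<alpha> \<in> R \<and> cartan_int \<gamma> \<alpha> = of_int n"
  unfolding Sig_def by simp

lemma inner_self_le_imp_eq:
  fixes x y :: "'a::real_inner"
  assumes "x \<bullet> x \<le> y \<bullet> y" and "x \<bullet> y = y \<bullet> y"
  shows "x = y"
proof -
  have "(x - y) \<bullet> (x - y) = x \<bullet> x - y \<bullet> y"
    using assms(2) by (simp add: inner_diff_left inner_diff_right inner_commute)
  also have "\<dots> \<le> 0" using assms(1) by simp
  finally show ?thesis by (metis inner_gt_zero_iff not_le right_minus_eq)
qed

lemma root_system_reflect:
  "root_system R \<Longrightarrow> \<gamma> \<in> R \<Longrightarrow> \<alpha> \<in> R \<Longrightarrow> \<alpha> - cartan_int \<gamma> \<alpha> *\<^sub>R \<gamma> \<in> R"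
  unfolding root_system_def by blast

lemma root_system_cartan_int_Ints:
  "root_system R \<Longrightarrow> \<gamma> \<in> R \<Longrightarrow> \<alpha> \<in> R \<Longrightarrow> cartan_int \<gamma> \<alpha> \<in> \<int>"
  unfolding root_system_def by blast

lemma root_system_nonzero: "root_system R \<Longrightarrow> \<alpha> \<in> R \<Longrightarrow> \<alpha> \<noteq> 0"
  unfolding root_system_def by blast

lemma root_system_uminus:
  assumes "root_system R" and "\<alpha> \<in> R"
  shows "- \<alpha> \<in> R"
  using root_system_reflect[OF assms(1,2,2)]
  by (simp add: cartan_int_self root_system_nonzero[OF assms] scaleR_2)

lemma root_system_diff_mem:
  assumes "root_system R" and "\<gamma> \<in> R" and "\<alpha> \<in> R" and "cartan_int \<gamma> \<alpha> = 1"
  shows "\<gamma> - \<alpha> \<in> R"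
  using root_system_uminus[OF assms(1) root_system_reflect[OF assms(1-3)]] assms(4) by simp

lemma Sig_uminus_iff: "root_system R \<Longrightarrow> - \<alpha> \<in> Sig R \<gamma> (- n) \<longleftrightarrow> \<alpha> \<in> Sig R \<gamma> n"
  by (metis mem_Sig_iff cartan_int_uminus minus_minus neg_equal_iff_equal of_int_minus
      root_system_uminus)

lemma Sig_one_inner_self_le:
  assumes R: "root_system R" and "\<beta> \<in> R" and "\<alpha> \<in> Sig R \<beta> 1"
  shows "\<alpha> \<bullet> \<alpha> \<le> \<beta> \<bullet> \<beta>"
proof -
  have "\<alpha> \<in> R" and "\<alpha> \<noteq> 0" and "\<beta> \<noteq> 0"
    using assms root_system_nonzero[OF R] by (auto simp: mem_Sig_iff)
  have pairing: "2 * (\<beta> \<bullet> \<alpha>) = \<beta> \<bullet> \<beta>"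
    using assms(3) \<open>\<beta> \<noteq> 0\<close> by (simp add: mem_Sig_iff cartan_int_eq_iff)
  have "cartan_int \<alpha> \<beta> = (\<beta> \<bullet> \<beta>) / (\<alpha> \<bullet> \<alpha>)"
    using pairing by (simp add: cartan_int_def inner_commute)
  moreover obtain k where "cartan_int \<alpha> \<beta> = of_int k"
    using root_system_cartan_int_Ints[OF R \<open>\<alpha> \<in> R\<close> \<open>\<beta> \<in> R\<close>] Ints_cases by metis
  ultimately have scale: "of_int k * (\<alpha> \<bullet> \<alpha>) = \<beta> \<bullet> \<beta>"
    using \<open>\<alpha> \<noteq> 0\<close> by (simp add: field_simps)
  then have "k > 0"
    using \<open>\<alpha> \<noteq> 0\<close> \<open>\<beta> \<noteq> 0\<close> by (metis inner_gt_zero_iff zero_less_mult_pos2 of_int_0_less_iff)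
  then have "1 * (\<alpha> \<bullet> \<alpha>) \<le> of_int k * (\<alpha> \<bullet> \<alpha>)"
    by (intro mult_right_mono) auto
  then show ?thesis using scale by simp
qed

lemma positive_system_uminus_notin:
  "positive_system R P \<Longrightarrow> \<gamma> \<in> P \<Longrightarrow> - \<gamma> \<notin> P"
  unfolding positive_system_def by auto

lemma positive_system_cases:
  assumes "root_system R" and "positive_system R P" and "\<gamma> \<in> R"
  obtains "\<gamma> \<in> P" | "- \<gamma> \<in> P"
  using assms root_system_uminus[OF assms(1,3)] unfolding positive_system_def
  by (metis (mono_tags, lifting) inner_minus_right linorder_neqE_linordered_idom mem_Collect_eq
      neg_0_less_iff_less)

lemma Sig_one_diff_mem:
  assumes R: "root_system R" and "\<beta> \<in> R" and "\<alpha> \<in> Sig R \<beta> 1"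
  shows "\<beta> - \<alpha> \<in> Sig R \<beta> 1"
proof -
  have "\<alpha> \<in> R" and "cartan_int \<beta> \<alpha> = 1" using assms(3) by (auto simp: mem_Sig_iff)
  then show ?thesis
    using root_system_diff_mem[OF R \<open>\<beta> \<in> R\<close>] root_system_nonzero[OF R \<open>\<beta> \<in> R\<close>]
    by (simp add: mem_Sig_iff cartan_int_diff cartan_int_self)
qed

lemma Sig_one_eq_of_inner_eq:
  assumes "root_system R" and "\<beta> \<in> R" and "\<alpha> \<in> Sig R \<beta> 1"
    and "\<rho> \<bullet> \<rho> = \<beta> \<bullet> \<beta>" and "\<alpha> \<bullet> \<rho> = \<beta> \<bullet> \<beta>"
  shows "\<alpha> = \<rho>"
  using inner_self_le_imp_eq Sig_one_inner_self_le[OF assms(1-3)] assms(4,5) by metis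

lemma Sig_one_inter_Sig_one_eq_image:
  assumes R: "root_system R" and \<delta>: "\<delta> \<in> Sig R \<beta> 1"
  shows "Sig R \<beta> 1 \<inter> Sig R \<delta> 1 = (\<lambda>\<gamma>. \<delta> - \<gamma>) ` (Sig R \<beta> 0 \<inter> Sig R \<delta> 1)"
proof -
  have "\<delta> \<in> R" and "cartan_int \<beta> \<delta> = 1" and "cartan_int \<delta> \<delta> = 2"
    using \<delta> root_system_nonzero[OF R] by (auto simp: mem_Sig_iff cartan_int_self)
  then have flip: "\<delta> - \<alpha> \<in> R \<and> cartan_int \<beta> (\<delta> - \<alpha>) = 1 - cartan_int \<beta> \<alpha>
      \<and> cartan_int \<delta> (\<delta> - \<alpha>) = 1" if "\<alpha> \<in> R" and "cartan_int \<delta> \<alpha> = 1" for \<alpha>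
    using root_system_diff_mem[OF R \<open>\<delta> \<in> R\<close> that] that(2) by (simp add: cartan_int_diff)
  show ?thesis
  proof (intro equalityI subsetI)
    fix \<alpha> assume "\<alpha> \<in> Sig R \<beta> 1 \<inter> Sig R \<delta> 1"
    then have "\<delta> - \<alpha> \<in> Sig R \<beta> 0 \<inter> Sig R \<delta> 1" using flip by (simp add: mem_Sig_iff)
    then show "\<alpha> \<in> (\<lambda>\<gamma>. \<delta> - \<gamma>) ` (Sig R \<beta> 0 \<inter> Sig R \<delta> 1)"
      by (rule rev_image_eqI) simp
  next
    fix \<alpha> assume "\<alpha> \<in> (\<lambda>\<gamma>. \<delta> - \<gamma>) ` (Sig R \<beta> 0 \<inter> Sig R \<delta> 1)"
    then show "\<alpha> \<in> Sig R \<beta> 1 \<inter> Sig R \<delta> 1" using flip by (auto simp: mem_Sig_iff)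
  qed
qed

lemma Sig_one_inter_Sig_one_eq:
  assumes R: "root_system R" and P: "positive_system R P" and \<delta>: "\<delta> \<in> Sig R \<beta> 1"
  shows "Sig R \<beta> 1 \<inter> Sig R \<delta> 1 =
           {\<delta> - \<gamma> | \<gamma>. \<gamma> \<in> P \<inter> Sig R \<beta> 0 \<inter> Sig R \<delta> 1}
           \<union> {\<delta> + \<gamma> | \<gamma>. \<gamma> \<in> P \<inter> Sig R \<beta> 0 \<inter> Sig R \<delta> (-1)}"
    (is "_ = ?minus \<union> ?plus")
proof -
  have "\<delta> - \<gamma> \<in> ?minus \<union> ?plus" if \<gamma>: "\<gamma> \<in> Sig R \<beta> 0 \<inter> Sig R \<delta> 1" for \<gamma>
  proof (rule positive_system_cases[OF R P])
    show "\<gamma> \<in> R" using \<gamma> by (simp add: mem_Sig_iff)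
  next
    assume "\<gamma> \<in> P"
    then show ?thesis using \<gamma> by blast
  next
    assume "- \<gamma> \<in> P"
    moreover have "- \<gamma> \<in> Sig R \<beta> 0 \<inter> Sig R \<delta> (-1)"
      using \<gamma> Sig_uminus_iff[OF R, of \<gamma> \<beta> 0] Sig_uminus_iff[OF R, of \<gamma> \<delta> 1] by simp
    ultimately have "\<delta> + - \<gamma> \<in> ?plus" by blast
    then show ?thesis by simp
  qed
  moreover have "\<delta> + \<gamma> \<in> (\<lambda>\<gamma>. \<delta> - \<gamma>) ` (Sig R \<beta> 0 \<inter> Sig R \<delta> 1)"
    if "\<gamma> \<in> Sig R \<beta> 0 \<inter> Sig R \<delta> (-1)" for \<gamma>
    using that Sig_uminus_iff[OF R, of "- \<gamma>" \<beta> 0] Sig_uminus_iff[OF R, of "- \<gamma>" \<delta> 1]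
    by (intro image_eqI[where x = "- \<gamma>"]) auto
  ultimately show ?thesis
    unfolding Sig_one_inter_Sig_one_eq_image[OF R \<delta>] by blast
qed

lemma diff_add_positive_disjoint:
  assumes "positive_system R P"
  shows "{\<delta> - \<gamma> | \<gamma>. \<gamma> \<in> P \<inter> A} \<inter> {\<delta> + \<gamma> | \<gamma>. \<gamma> \<in> P \<inter> B} = {}"
proof -
  have "\<delta> - \<gamma> \<noteq> \<delta> + \<gamma>'" if "\<gamma> \<in> P" and "\<gamma>' \<in> P" for \<gamma> \<gamma>'
  proof
    assume "\<delta> - \<gamma> = \<delta> + \<gamma>'"
    then have "\<gamma>' = - \<gamma>" by (metis add_left_cancel diff_conv_add_uminus)
    then show False using positive_system_uminus_notin[OF assms] that by blast
  qed
  then show ?thesis by blast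
qed

lemma Sig_one_inter_Sig_zero_eq:
  assumes R: "root_system R" and "\<beta> \<in> R" and "cartan_int \<delta> \<beta> = 1"
  shows "Sig R \<beta> 1 \<inter> Sig R \<delta> 0 = {\<beta> - \<gamma> | \<gamma>. \<gamma> \<in> Sig R \<beta> 1 \<inter> Sig R \<delta> 1}"
proof -
  have flip: "\<beta> - \<alpha> \<in> Sig R \<beta> 1 \<and> cartan_int \<delta> (\<beta> - \<alpha>) = 1 - cartan_int \<delta> \<alpha>"
    if "\<alpha> \<in> Sig R \<beta> 1" for \<alpha>
    using Sig_one_diff_mem[OF R \<open>\<beta> \<in> R\<close> that] assms(3) by (simp add: cartan_int_diff)
  show ?thesis
  proof (intro equalityI subsetI)
    fix \<alpha> assume "\<alpha> \<in> Sig R \<beta> 1 \<inter> Sig R \<delta> 0"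
    then have "\<beta> - \<alpha> \<in> Sig R \<beta> 1 \<inter> Sig R \<delta> 1" using flip by (auto simp: mem_Sig_iff)
    then show "\<alpha> \<in> {\<beta> - \<gamma> | \<gamma>. \<gamma> \<in> Sig R \<beta> 1 \<inter> Sig R \<delta> 1}" by force
  next
    fix \<alpha> assume "\<alpha> \<in> {\<beta> - \<gamma> | \<gamma>. \<gamma> \<in> Sig R \<beta> 1 \<inter> Sig R \<delta> 1}"
    then show "\<alpha> \<in> Sig R \<beta> 1 \<inter> Sig R \<delta> 0" using flip by (auto simp: mem_Sig_iff)
  qed
qed

lemma Sig_one_inter_Sig_two_eq:
  assumes R: "root_system R" and "\<beta> \<in> R" and \<delta>: "\<delta> \<in> Sig R \<beta> 1" and "\<delta> \<bullet> \<delta> = \<beta> \<bullet> \<beta>"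
  shows "Sig R \<beta> 1 \<inter> Sig R \<delta> 2 = {\<delta>}"
proof -
  have "\<delta> \<noteq> 0" using \<delta> root_system_nonzero[OF R] by (simp add: mem_Sig_iff)
  have "\<alpha> = \<delta>" if "\<alpha> \<in> Sig R \<beta> 1" and "cartan_int \<delta> \<alpha> = 2" for \<alpha>
    using Sig_one_eq_of_inner_eq[OF R \<open>\<beta> \<in> R\<close> that(1) assms(4)] that(2) assms(4) \<open>\<delta> \<noteq> 0\<close>
    by (simp add: cartan_int_eq_iff inner_commute)
  then show ?thesis using \<delta> \<open>\<delta> \<noteq> 0\<close> by (auto simp: mem_Sig_iff cartan_int_self)
qed

lemma Sig_one_inter_Sig_minus_one_eq:
  assumes R: "root_system R" and "\<beta> \<in> R" and \<delta>: "\<delta> \<in> Sig R \<beta> 1" and "\<delta> \<bullet> \<delta> = \<beta> \<bullet> \<beta>"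
  shows "Sig R \<beta> 1 \<inter> Sig R \<delta> (-1) = {\<beta> - \<delta>}"
proof -
  have "\<delta> \<noteq> 0" and "\<beta> \<noteq> 0" using \<delta> \<open>\<beta> \<in> R\<close> root_system_nonzero[OF R] by (auto simp: mem_Sig_iff)
  have \<beta>\<delta>: "2 * (\<beta> \<bullet> \<delta>) = \<beta> \<bullet> \<beta>"
    using \<delta> \<open>\<beta> \<noteq> 0\<close> by (simp add: mem_Sig_iff cartan_int_eq_iff)
  have "\<alpha> = \<beta> - \<delta>" if "\<alpha> \<in> Sig R \<beta> 1 \<inter> Sig R \<delta> (-1)" for \<alpha>
  proof (rule Sig_one_eq_of_inner_eq[OF R \<open>\<beta> \<in> R\<close>])
    show "\<alpha> \<in> Sig R \<beta> 1" using that by simp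
    show "(\<beta> - \<delta>) \<bullet> (\<beta> - \<delta>) = \<beta> \<bullet> \<beta>"
      using \<beta>\<delta> assms(4) by (simp add: inner_diff_left inner_diff_right inner_commute)
    have "2 * (\<beta> \<bullet> \<alpha>) = \<beta> \<bullet> \<beta>" and "2 * (\<delta> \<bullet> \<alpha>) = - (\<beta> \<bullet> \<beta>)"
      using that \<open>\<beta> \<noteq> 0\<close> \<open>\<delta> \<noteq> 0\<close> assms(4) by (simp_all add: mem_Sig_iff cartan_int_eq_iff)
    then show "\<alpha> \<bullet> (\<beta> - \<delta>) = \<beta> \<bullet> \<beta>" by (simp add: inner_diff_right inner_commute)
  qed
  moreover have "cartan_int \<delta> \<beta> = 1"
    using \<delta> cartan_int_commute[OF assms(4)] by (simp add: mem_Sig_iff)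
  then have "\<beta> - \<delta> \<in> Sig R \<beta> 1 \<inter> Sig R \<delta> (-1)"
    using Sig_one_diff_mem[OF R \<open>\<beta> \<in> R\<close> \<delta>] \<open>\<delta> \<noteq> 0\<close>
    by (simp add: mem_Sig_iff cartan_int_diff cartan_int_self)
  ultimately show ?thesis by blast
qed

theorem lemma3p4:
  fixes R P :: "'a::euclidean_space set" and \<beta> \<delta> :: 'a
  assumes "irreducible_root_system R"
    and "positive_system R P"
    and "highest_root R P \<beta>"
    and "\<delta> \<in> Sig R \<beta> 1"
    and "\<delta> \<bullet> \<delta> = \<beta> \<bullet> \<beta>"
  shows "Sig R \<beta> 1 \<inter> Sig R \<delta> 1 =
           {\<delta> - \<gamma> | \<gamma>. \<gamma> \<in> P \<inter> Sig R \<beta> 0 \<inter> Sig R \<delta> 1}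
           \<union> {\<delta> + \<gamma> | \<gamma>. \<gamma> \<in> P \<inter> Sig R \<beta> 0 \<inter> Sig R \<delta> (-1)}
       \<and> {\<delta> - \<gamma> | \<gamma>. \<gamma> \<in> P \<inter> Sig R \<beta> 0 \<inter> Sig R \<delta> 1}
           \<inter> {\<delta> + \<gamma> | \<gamma>. \<gamma> \<in> P \<inter> Sig R \<beta> 0 \<inter> Sig R \<delta> (-1)} = {}
       \<and> Sig R \<beta> 1 \<inter> Sig R \<delta> 0 = {\<beta> - \<gamma> | \<gamma>. \<gamma> \<in> Sig R \<beta> 1 \<inter> Sig R \<delta> 1}
       \<and> Sig R \<beta> 1 \<inter> Sig R \<delta> 2 = {\<delta>}
       \<and> Sig R \<beta> 1 \<inter> Sig R \<delta> (-1) = {\<beta> - \<delta>}"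
proof -
  have R: "root_system R" using assms(1) by (simp add: irreducible_root_system_def)
  have "\<beta> \<in> R" using assms(3) by (simp add: highest_root_def)
  have "cartan_int \<delta> \<beta> = 1"
    using assms(4,5) by (simp add: mem_Sig_iff cartan_int_commute)
  show ?thesis
    using Sig_one_inter_Sig_one_eq[OF R assms(2,4)]
      diff_add_positive_disjoint[OF assms(2)]
      Sig_one_inter_Sig_zero_eq[OF R \<open>\<beta> \<in> R\<close> \<open>cartan_int \<delta> \<beta> = 1\<close>]
      Sig_one_inter_Sig_two_eq[OF R \<open>\<beta> \<in> R\<close> assms(4,5)]
      Sig_one_inter_Sig_minus_one_eq[OF R \<open>\<beta> \<in> R\<close> assms(4,5)]
    by blast
qed

end
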